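(* The morphism $\mathrm{B\acute{e}z}_2\times\phi_2:\mathcal{F}_2\to\mathcal{S}_2\times\mathbf{A}^1$ is a $\mathbf{G}_a$-equivariant isomorphism of schemes.
   Context: Let $k$ be a field; all schemes are over $k$. For a $k$-algebra $R$, $\mathcal{F}_2(R)$ is the set of pairs $(A,B)$ of polynomials in $R[X]$, $A$ monic of degree $2$, $\deg B<2$, $\mathrm{res}_{2,2}(A,B)\in R^\times$. $\mathcal{S}_2(R)$ is the set of symmetric $2\times2$ matrices over $R$ with invertible determinant. Bézout form: writing $\frac{A(X)B(Y)-A(Y)B(X)}{X-Y}=\sum_{1\le p,q\le 2}c_{p,q}X^{p-1}Y^{q-1}$, $\mathrm{B\acute{e}z}_2(A,B)=[c_{p,q}]$. $\phi_2(A,B)$ is the opposite of the coefficient of $X$ in $V_1$, where $(U_1,V_1)$ is the unique pair with $\deg U_1=1$, $\deg V_1\le1$, $AU_1+BV_1=X^3$. $\mathbf{G}_a$ acts on $\mathcal{F}_2$ by $h\cdot\frac{A}{B}=\frac{A+hB}{B}$, trivially on $\mathcal{S}_2$, and by translation on $\mathbf{A}^1$. *)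

theory Defs
  imports "Subresultants.Resultant_Prelim"
begin

definition res_mn :: "nat \<Rightarrow> nat \<Rightarrow> 'a::comm_ring_1 poly \<Rightarrow> 'a poly \<Rightarrow> 'a" where
  "res_mn m n A B = det (sylvester_mat_sub m n A B)"

definition invertible_elt :: "'a::comm_ring_1 \<Rightarrow> bool" where
  "invertible_elt x \<longleftrightarrow> (\<exists>y. x * y = 1)"

text \<open>R-points of F_2: A monic of degree 2, deg B < 2, res_{2,2}(A,B) a unit.\<close>
definition F2 :: "('a::comm_ring_1 poly \<times> 'a poly) set" where
  "F2 = {(A, B). degree A = 2 \<and> lead_coeff A = 1 \<and> degree B < 2 \<and> invertible_elt (res_mn 2 2 A B)}"

text \<open>R-points of S_2: symmetric 2x2 matrices with invertible determinant.\<close>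
definition S2 :: "'a::comm_ring_1 mat set" where
  "S2 = {M. M \<in> carrier_mat 2 2 \<and> transpose_mat M = M \<and> invertible_elt (det M)}"

text \<open>Bivariate polynomials as ('a poly) poly: inner variable X, outer variable Y.\<close>
definition polyX :: "'a::comm_ring_1 poly \<Rightarrow> 'a poly poly" where
  "polyX P = [:P:]"

definition polyY :: "'a::comm_ring_1 poly \<Rightarrow> 'a poly poly" where
  "polyY P = map_poly (\<lambda>c. [:c:]) P"

definition bez_coeffs :: "nat \<Rightarrow> 'a::comm_ring_1 poly \<Rightarrow> 'a poly \<Rightarrow> nat \<Rightarrow> nat \<Rightarrow> 'a" where
  "bez_coeffs n A B = (THE c.
     (\<forall>p q. \<not> (1 \<le> p \<and> p \<le> n \<and> 1 \<le> q \<and> q \<le> n) \<longrightarrow> c p q = 0) \<and>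
     polyX A * polyY B - polyY A * polyX B =
       (polyX [:0, 1:] - polyY [:0, 1:]) *
       (\<Sum>p\<in>{1..n}. \<Sum>q\<in>{1..n}. polyX (monom (c p q) (p - 1)) * polyY (monom 1 (q - 1))))"

definition Bez :: "nat \<Rightarrow> 'a::comm_ring_1 poly \<Rightarrow> 'a poly \<Rightarrow> 'a mat" where
  "Bez n A B = mat n n (\<lambda>(i, j). bez_coeffs n A B (i + 1) (j + 1))"

definition phi2 :: "'a::comm_ring_1 poly \<Rightarrow> 'a poly \<Rightarrow> 'a" where
  "phi2 A B = (let (U1, V1) = (THE (U, V). degree U = 1 \<and> degree V \<le> 1 \<and>
                                   A * U + B * V = monom 1 3)
               in - coeff V1 1)"

definition Ga_act :: "'a::comm_ring_1 \<Rightarrow> 'a poly \<times> 'a poly \<Rightarrow> 'a poly \<times> 'a poly" where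
  "Ga_act h AB = (fst AB + smult h (snd AB), snd AB)"

end

theory Submission
  imports Defs
begin

text \<open>
  Write \<open>A = X\<^sup>2 + a\<^sub>1 X + a\<^sub>0\<close> and \<open>B = b\<^sub>1 X + b\<^sub>0\<close>. The Bezout matrix is
  \<open>[[a\<^sub>1 b\<^sub>0 - a\<^sub>0 b\<^sub>1, b\<^sub>0], [b\<^sub>0, b\<^sub>1]]\<close>, whose determinant is minus the resultant, so it
  lies in \<open>S\<^sub>2\<close>. Replacing \<open>A\<close> by \<open>A + hB\<close> does not change \<open>A(X)B(Y) - A(Y)B(X)\<close>, hence not
  the Bezout matrix, and it turns the unique solution \<open>(U, V)\<close> of \<open>AU + BV = X\<^sup>3\<close> into
  \<open>(U, V - hU)\<close>; as \<open>U\<close> is monic, \<open>\<phi>\<^sub>2\<close> grows by \<open>h\<close>. Conversely, two pairs with the same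
  Bezout matrix lie in one \<open>G\<^sub>a\<close>-orbit, since the unit resultant makes \<open>(b\<^sub>0, b\<^sub>1)\<close>
  unimodular, and every symmetric matrix with unit determinant is a Bezout matrix. So
  \<open>Bez\<^sub>2\<close> identifies the orbits with \<open>S\<^sub>2\<close>, and \<open>\<phi>\<^sub>2\<close> is an equivariant coordinate along
  each orbit.
\<close>

lemma det_expand_first_row:
  assumes "(A :: 'a :: comm_ring_1 mat) \<in> carrier_mat (Suc n) (Suc n)"
  shows "det A = (\<Sum>j<Suc n. (-1)^j * A $$ (0,j) * det (mat_delete A 0 j))"
  using laplace_expansion_row[OF assms, of 0] by (simp add: cofactor_def mult.commute mult.left_commute)

lemma mat_delete_first_row_index:
  assumes "i < dim_row A - 1" "k < dim_col A - 1"
  shows "mat_delete A 0 j $$ (i, k) = A $$ (Suc i, if k < j then k else Suc k)"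
  using assms by (simp add: mat_delete_def)

lemma det_2x2:
  assumes "(A :: 'a :: comm_ring_1 mat) \<in> carrier_mat 2 2"
  shows "det A = A $$ (0,0) * A $$ (1,1) - A $$ (0,1) * A $$ (1,0)"
proof -
  have "mat_delete A 0 j \<in> carrier_mat 1 1" for j
    using mat_delete_carrier[OF assms] by simp
  then show ?thesis
    using assms det_expand_first_row[of A 1]
    by (simp add: det_single mat_delete_first_row_index numeral_2_eq_2 lessThan_Suc)
qed

lemma det_3x3:
  assumes "(A :: 'a :: comm_ring_1 mat) \<in> carrier_mat 3 3"
  shows "det A = A $$ (0,0) * (A $$ (1,1) * A $$ (2,2) - A $$ (1,2) * A $$ (2,1))
     - A $$ (0,1) * (A $$ (1,0) * A $$ (2,2) - A $$ (1,2) * A $$ (2,0))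
     + A $$ (0,2) * (A $$ (1,0) * A $$ (2,1) - A $$ (1,1) * A $$ (2,0))"
proof -
  have "mat_delete A 0 j \<in> carrier_mat 2 2" for j
    using mat_delete_carrier[OF assms] by simp
  then show ?thesis
    using assms det_expand_first_row[of A 2]
    by (simp add: det_2x2 mat_delete_first_row_index numeral_eq_Suc lessThan_Suc)
qed

lemma res_mn_2_2:
  "res_mn 2 2 [:a0, a1, 1:] [:b0, b1:] = (b0^2 - a1*b0*b1 + a0*b1^2 :: 'a::comm_ring_1)"
proof -
  let ?S = "sylvester_mat_sub 2 2 [:a0, a1, 1:] [:b0, b1:]"
  have S: "?S \<in> carrier_mat 4 4"
    by (simp add: sylvester_mat_sub_def)
  have "mat_delete ?S 0 j \<in> carrier_mat 3 3" for j
    using mat_delete_carrier[OF S] by simp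
  then show ?thesis
    using S det_expand_first_row[of ?S 3]
    by (simp add: res_mn_def det_3x3 mat_delete_first_row_index sylvester_mat_sub_index
        numeral_eq_Suc lessThan_Suc power2_eq_square algebra_simps)
qed

lemma linear_poly_eq:
  assumes "degree (p :: 'a::zero poly) \<le> 1"
  shows "p = [:coeff p 0, coeff p 1:]"
proof (rule poly_eqI)
  fix n show "coeff p n = coeff [:coeff p 0, coeff p 1:] n"
    using assms by (cases n) (auto simp: coeff_pCons coeff_eq_0 split: nat.split)
qed

lemma monic_quadratic_poly_eq:
  assumes "degree (p :: 'a::zero_neq_one poly) = 2" and "lead_coeff p = 1"
  shows "p = [:coeff p 0, coeff p 1, 1:]"
proof (rule poly_eqI)
  fix n show "coeff p n = coeff [:coeff p 0, coeff p 1, 1:] n"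
    using assms by (cases n) (auto simp: coeff_pCons coeff_eq_0 numeral_2_eq_2 split: nat.split)
qed

lemma F2_iff:
  "((A :: 'a::comm_ring_1 poly), B) \<in> F2 \<longleftrightarrow>
    (\<exists>a0 a1 b0 b1. A = [:a0, a1, 1:] \<and> B = [:b0, b1:]
       \<and> invertible_elt (b0^2 - a1*b0*b1 + a0*b1^2))"
proof
  assume "(A, B) \<in> F2"
  then have "degree A = 2" "lead_coeff A = 1" "degree B \<le> 1" "invertible_elt (res_mn 2 2 A B)"
    by (auto simp: F2_def)
  then show "\<exists>a0 a1 b0 b1. A = [:a0, a1, 1:] \<and> B = [:b0, b1:]
       \<and> invertible_elt (b0^2 - a1*b0*b1 + a0*b1^2)"
    by (metis linear_poly_eq monic_quadratic_poly_eq res_mn_2_2)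
next
  assume "\<exists>a0 a1 b0 b1. A = [:a0, a1, 1:] \<and> B = [:b0, b1:]
       \<and> invertible_elt (b0^2 - a1*b0*b1 + a0*b1^2)"
  then obtain a0 a1 b0 b1 where "A = [:a0, a1, 1:]" "B = [:b0, b1:]"
    and "invertible_elt (b0^2 - a1*b0*b1 + a0*b1^2)"
    by blast
  moreover have "degree [:b0, b1:] < 2"
    by (simp add: less_Suc_eq_le degree_pCons_le)
  ultimately show "(A, B) \<in> F2"
    by (simp add: F2_def res_mn_2_2)
qed

lemma Ga_act_F2:
  assumes "(A, B) \<in> (F2 :: ('a::comm_ring_1 poly \<times> 'a poly) set)"
  shows "Ga_act h (A, B) \<in> F2"
proof -
  obtain a0 a1 b0 b1 where A: "A = [:a0, a1, 1:]" and B: "B = [:b0, b1:]"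
    and res: "invertible_elt (b0^2 - a1*b0*b1 + a0*b1^2)"
    using assms F2_iff by blast
  have act: "Ga_act h (A, B) = ([:a0 + h*b0, a1 + h*b1, 1:], B)"
    by (simp add: Ga_act_def A B)
  have "b0^2 - (a1 + h*b1)*b0*b1 + (a0 + h*b0)*b1^2 = b0^2 - a1*b0*b1 + a0*b1^2"
    by (simp add: algebra_simps power2_eq_square)
  then show ?thesis
    unfolding act F2_iff using res B by metis
qed

lemma polyY_0: "polyY 0 = 0"
  by (simp add: polyY_def)

lemma polyY_pCons: "polyY (pCons a p) = pCons [:a:] (polyY p)"
  by (rule poly_eqI) (simp add: polyY_def coeff_map_poly coeff_pCons split: nat.split)

lemma polyX_add: "polyX (P + Q) = polyX P + polyX Q"
  by (simp add: polyX_def)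

lemma polyY_add: "polyY (P + Q) = polyY P + polyY Q"
  by (rule poly_eqI) (simp add: polyY_def coeff_map_poly)

lemma polyX_smult: "polyX (smult h P) = [:[:h:]:] * polyX P"
  by (simp add: polyX_def)

lemma polyY_smult: "polyY (smult h P) = [:[:h:]:] * polyY P"
  by (simp add: polyY_def map_poly_smult)

lemma bez_coeffs_Ga_act: "bez_coeffs n (A + smult h B) B = bez_coeffs n A B"
proof -
  have "polyX (A + smult h B) * polyY B - polyY (A + smult h B) * polyX B
      = polyX A * polyY B - polyY A * polyX B"
    by (simp add: polyX_add polyY_add polyX_smult polyY_smult algebra_simps)
  then show ?thesis
    by (simp add: bez_coeffs_def)
qed

lemma Bez_Ga_act: "Bez n (A + smult h B) B = Bez n A B"
  by (simp add: Bez_def bez_coeffs_Ga_act)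

lemma X_minus_Y_mult_cancel:
  fixes S T :: "'a::comm_ring_1 poly poly"
  assumes "(polyX [:0, 1:] - polyY [:0, 1:]) * S = (polyX [:0, 1:] - polyY [:0, 1:]) * T"
  shows "S = T"
proof (rule ccontr)
  let ?D = "polyX [:0, 1:] - polyY [:0, 1 :: 'a:]"
  assume "S \<noteq> T"
  have D: "?D = [:[:0, 1:], [:-1:]:]"
    by (simp add: polyX_def polyY_pCons polyY_0)
  have "?D * (S - T) = 0"
    using assms by (simp add: right_diff_distrib)
  then have "coeff ?D (degree ?D) * lead_coeff (S - T) = 0"
    by (metis coeff_mult_degree_sum coeff_0)
  then have "lead_coeff (S - T) = 0"
    unfolding D by simp
  then have "S - T = 0"
    by (simp only: leading_coeff_0_iff)
  then show False
    using \<open>S \<noteq> T\<close> by simp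
qed

lemma bez_sum_2:
  "(\<Sum>p\<in>{1..2::nat}. \<Sum>q\<in>{1..2::nat}. polyX (monom (c p q) (p - 1)) * polyY (monom 1 (q - 1)))
    = [:[:c 1 1, c 2 1:], [:c 1 2, c 2 2 :: 'a::comm_ring_1:]:]"
proof -
  have "{1..2::nat} = {1, 2}"
    by auto
  then show ?thesis
    by (simp add: polyX_def polyY_pCons polyY_0 monom_Suc monom_0)
qed

lemma bez_identity_2:
  "polyX [:a0, a1, 1:] * polyY [:b0, b1:] - polyY [:a0, a1, 1:] * polyX [:b0, b1:]
    = (polyX [:0, 1:] - polyY [:0, 1:]) * [:[:a1*b0 - a0*b1, b0:], [:b0, b1 :: 'a::comm_ring_1:]:]"
  by (simp add: polyX_def polyY_pCons polyY_0 algebra_simps)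

lemma bez_coeffs_2:
  "bez_coeffs 2 [:a0, a1, 1:] [:b0, b1:] = (\<lambda>p q.
     if (p, q) = (1, 1) then a1*b0 - a0*b1
     else if (p, q) = (2, 2) then b1
     else if (p, q) \<in> {(1, 2), (2, 1)} then b0 else (0 :: 'a::comm_ring_1))"
  (is "_ = ?c")
  unfolding bez_coeffs_def
proof (rule the_equality)
  fix c :: "nat \<Rightarrow> nat \<Rightarrow> 'a"
  assume c: "(\<forall>p q. \<not> (1 \<le> p \<and> p \<le> 2 \<and> 1 \<le> q \<and> q \<le> 2) \<longrightarrow> c p q = 0) \<and>
    polyX [:a0, a1, 1:] * polyY [:b0, b1:] - polyY [:a0, a1, 1:] * polyX [:b0, b1:] =
    (polyX [:0, 1:] - polyY [:0, 1:]) *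
    (\<Sum>p\<in>{1..2}. \<Sum>q\<in>{1..2}. polyX (monom (c p q) (p - 1)) * polyY (monom 1 (q - 1)))"
  then have "(polyX [:0, 1:] - polyY [:0, 1:]) * [:[:a1*b0 - a0*b1, b0:], [:b0, b1:]:]
      = (polyX [:0, 1:] - polyY [:0, 1:]) * [:[:c 1 1, c 2 1:], [:c 1 2, c 2 2:]:]"
    unfolding bez_identity_2 bez_sum_2 by (rule conjunct2)
  then have "[:[:a1*b0 - a0*b1, b0:], [:b0, b1:]:] = [:[:c 1 1, c 2 1:], [:c 1 2, c 2 2:]:]"
    by (rule X_minus_Y_mult_cancel)
  then have "c 1 1 = a1*b0 - a0*b1" "c 1 2 = b0" "c 2 1 = b0" "c 2 2 = b1"
    unfolding pCons_eq_iff by metis+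
  moreover have "c p q = 0" if "\<not> (1 \<le> p \<and> p \<le> 2 \<and> 1 \<le> q \<and> q \<le> 2)" for p q
    using c that by blast
  ultimately show "c = ?c"
    by (intro ext) (auto simp: le_Suc_eq numeral_2_eq_2)
next
  show "(\<forall>p q. \<not> (1 \<le> p \<and> p \<le> 2 \<and> 1 \<le> q \<and> q \<le> 2) \<longrightarrow> ?c p q = 0) \<and>
    polyX [:a0, a1, 1:] * polyY [:b0, b1:] - polyY [:a0, a1, 1:] * polyX [:b0, b1:] =
    (polyX [:0, 1:] - polyY [:0, 1:]) *
    (\<Sum>p\<in>{1..2}. \<Sum>q\<in>{1..2}. polyX (monom (?c p q) (p - 1)) * polyY (monom 1 (q - 1)))"
    unfolding bez_identity_2 bez_sum_2 by auto
qed

lemma Bez_2: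
  "Bez 2 [:a0, a1, 1:] [:b0, b1:] = mat_of_rows_list 2 [[a1*b0 - a0*b1, b0], [b0, b1 :: 'a::comm_ring_1]]"
  unfolding Bez_def bez_coeffs_2
  by (rule eq_matI) (auto simp: mat_of_rows_list_def less_Suc_eq numeral_2_eq_2)

lemma det_Bez_2:
  "det (Bez 2 [:a0, a1, 1:] [:b0, b1:]) = - res_mn 2 2 [:a0, a1, 1:] [:b0, b1 :: 'a::comm_ring_1:]"
  unfolding Bez_2 res_mn_2_2
  by (subst det_2x2) (auto simp: mat_of_rows_list_def algebra_simps power2_eq_square)

lemma Bez_2_in_S2:
  assumes "(A, B) \<in> F2"
  shows "Bez 2 A B \<in> S2"
proof -
  obtain a0 a1 b0 b1 where A: "A = [:a0, a1, 1:]" and B: "B = [:b0, b1:]"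
    using assms unfolding F2_iff by blast
  obtain y where "res_mn 2 2 A B * y = 1"
    using assms by (auto simp: F2_def invertible_elt_def)
  then have "det (Bez 2 A B) * (- y) = 1"
    unfolding A B det_Bez_2 by simp
  then have "invertible_elt (det (Bez 2 A B))"
    unfolding invertible_elt_def by blast
  moreover have "transpose_mat (Bez 2 A B) = Bez 2 A B"
    unfolding A B Bez_2
    by (rule eq_matI) (auto simp: mat_of_rows_list_def less_Suc_eq numeral_2_eq_2)
  moreover have "Bez 2 A B \<in> carrier_mat 2 2"
    unfolding A B Bez_2 mat_of_rows_list_def by (simp add: numeral_2_eq_2)
  ultimately show ?thesis
    unfolding S2_def by blast
qed

lemma Bez_2_eq_imp_Ga_act:
  assumes "(A, B) \<in> F2" "(A', B') \<in> F2" and "Bez 2 A B = Bez 2 A' B'"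
  shows "\<exists>h. (A', B') = Ga_act h (A, B)"
proof -
  obtain a0 a1 b0 b1 r y where A: "A = [:a0, a1, 1:]" and B: "B = [:b0, b1:]"
    and r: "r = b0^2 - a1*b0*b1 + a0*b1^2" and "r * y = 1"
    using assms(1) unfolding F2_iff invertible_elt_def by blast
  obtain a0' a1' b0' b1' where A': "A' = [:a0', a1', 1:]" and B': "B' = [:b0', b1':]"
    using assms(2) unfolding F2_iff by blast
  have "Bez 2 A B $$ (0, 1) = Bez 2 A' B' $$ (0, 1)" "Bez 2 A B $$ (1, 1) = Bez 2 A' B' $$ (1, 1)"
    "Bez 2 A B $$ (0, 0) = Bez 2 A' B' $$ (0, 0)"
    using assms(3) by simp_all
  then have b0: "b0' = b0" and b1: "b1' = b1" and m: "a1'*b0 - a0'*b1 = a1*b0 - a0*b1"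
    unfolding A B A' B' Bez_2 by (simp_all add: mat_of_rows_list_def)
  define d0 d1 where "d0 = a0' - a0" and "d1 = a1' - a1"
  \<comment> \<open>\<open>(d\<^sub>0, d\<^sub>1)\<close> is proportional to \<open>(b\<^sub>0, b\<^sub>1)\<close>, and \<open>r = b\<^sub>0 b\<^sub>0 - b\<^sub>1 (a\<^sub>1 b\<^sub>0 - a\<^sub>0 b\<^sub>1)\<close> exhibits the factor\<close>
  define h where "h = y * (b0*d0 - (a1*b0 - a0*b1)*d1)"
  have "b1*d0 - b0*d1 = 0"
    using m by (simp add: d0_def d1_def algebra_simps)
  moreover have "h*b0 = d0*(r*y) + y*(a1*b0 - a0*b1)*(b1*d0 - b0*d1)"
    "h*b1 = d1*(r*y) + y*b0*(b1*d0 - b0*d1)"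
    by (simp_all add: h_def r algebra_simps power2_eq_square)
  ultimately have "a0' = a0 + h*b0" "a1' = a1 + h*b1"
    using \<open>r * y = 1\<close> by (simp_all add: d0_def d1_def)
  then have "(A', B') = Ga_act h (A, B)"
    by (simp add: Ga_act_def A B A' B' b0 b1)
  then show ?thesis ..
qed

lemma Bez_2_onto_S2:
  assumes "M \<in> S2"
  shows "\<exists>A B. (A, B) \<in> F2 \<and> Bez 2 A B = M"
proof -
  have M: "M \<in> carrier_mat 2 2" and sym: "transpose_mat M = M" and "invertible_elt (det M)"
    using assms by (auto simp: S2_def)
  then obtain y where "det M * y = 1"
    by (auto simp: invertible_elt_def)
  define m b0 b1 where "m = M $$ (0, 0)" and "b0 = M $$ (0, 1)" and "b1 = M $$ (1, 1)"
  have "M $$ (1, 0) = b0"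
    using M arg_cong[OF sym, of "\<lambda>M. M $$ (0, 1)"] by (simp add: m_def b0_def b1_def)
  then have det: "det M = m*b1 - b0*b0"
    by (simp add: det_2x2[OF M] m_def b0_def b1_def)
  define a0 a1 where "a0 = - m*m*y" and "a1 = - m*b0*y"
  have "a1*b0 - a0*b1 = m*(det M * y)"
    by (simp add: det a0_def a1_def algebra_simps)
  then have "Bez 2 [:a0, a1, 1:] [:b0, b1:] = M"
    using M \<open>det M * y = 1\<close> \<open>M $$ (1, 0) = b0\<close> unfolding Bez_2
    by (intro eq_matI) (auto simp: mat_of_rows_list_def less_Suc_eq numeral_2_eq_2 m_def b0_def b1_def)
  moreover have "res_mn 2 2 [:a0, a1, 1:] [:b0, b1:] * (- y) = 1"
    using det_Bez_2[of a0 a1 b0 b1] \<open>det M * y = 1\<close> calculation by simp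
  then have "invertible_elt (res_mn 2 2 [:a0, a1, 1:] [:b0, b1:])"
    unfolding invertible_elt_def by blast
  then have "([:a0, a1, 1:], [:b0, b1:]) \<in> F2"
    unfolding F2_iff res_mn_2_2 by blast
  ultimately show ?thesis
    by blast
qed

lemma quadratic_linear_combination:
  "[:a0, a1, 1:] * [:u0, u1:] + [:b0, b1:] * [:v0, v1:] =
    [:a0*u0 + b0*v0, a0*u1 + a1*u0 + b0*v1 + b1*v0, u0 + a1*u1 + b1*v1, u1 :: 'a::comm_ring_1:]"
  by (simp add: algebra_simps)

lemma monom_1_3: "monom 1 3 = [:0, 0, 0, 1 :: 'a::comm_ring_1:]"
  by (simp add: monom_Suc numeral_3_eq_3 monom_0)

lemma F2_syzygy_trivial:
  assumes "(A, B) \<in> F2" and "degree U \<le> 1" "degree V \<le> 1" and "A * U + B * V = 0"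
  shows "U = 0 \<and> V = 0"
proof -
  obtain a0 a1 b0 b1 r y where A: "A = [:a0, a1, 1:]" and B: "B = [:b0, b1:]"
    and r: "r = b0^2 - a1*b0*b1 + a0*b1^2" and "r * y = 1"
    using assms(1) unfolding F2_iff invertible_elt_def by blast
  obtain u0 u1 v0 v1 where U: "U = [:u0, u1:]" and V: "V = [:v0, v1:]"
    using linear_poly_eq[OF assms(2)] linear_poly_eq[OF assms(3)] by blast
  have "[:a0*u0 + b0*v0, a0*u1 + a1*u0 + b0*v1 + b1*v0, u0 + a1*u1 + b1*v1, u1:] = 0"
    using assms(4) unfolding A B U V quadratic_linear_combination .
  then obtain e0: "a0*u0 + b0*v0 = 0" and e1: "a0*u1 + a1*u0 + b0*v1 + b1*v0 = 0"
    and e2: "u0 + a1*u1 + b1*v1 = 0" and e3: "u1 = 0"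
    unfolding pCons_eq_0_iff by blast
  have cancel: "x = 0" if "r * x = 0" for x
    by (metis \<open>r * y = 1\<close> that mult.left_commute mult_1_right mult_zero_right)
  have "r * v1 = b0 * (a0*u1 + a1*u0 + b0*v1 + b1*v0)
      - b1 * (a0*u0 + b0*v0) - (a1*b0 - a0*b1) * (u0 + a1*u1 + b1*v1)
      - (a0*b0 - a1^2*b0 + a0*a1*b1) * u1"
    by (simp add: r algebra_simps power2_eq_square)
  also have "\<dots> = 0"
    using e0 e1 e2 e3 by simp
  finally have v1: "v1 = 0"
    by (rule cancel)
  then have u0: "u0 = 0"
    using e2 e3 by simp
  have "b0 * v0 = 0" "b1 * v0 = 0"
    using e0 e1 e3 u0 v1 by simp_all
  moreover have "r * v0 = (b0 - a1*b1) * (b0 * v0) + a0*b1 * (b1 * v0)"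
    by (simp add: r algebra_simps power2_eq_square)
  ultimately have "r * v0 = 0"
    by simp
  then have "v0 = 0"
    by (rule cancel)
  then show ?thesis
    unfolding U V using e3 u0 v1 by simp
qed

lemma F2_bezout_X3_unique:
  assumes "(A, B) \<in> F2"
    and "degree U \<le> 1" "degree V \<le> 1" "A * U + B * V = monom 1 3"
    and "degree U' \<le> 1" "degree V' \<le> 1" "A * U' + B * V' = monom 1 3"
  shows "U = U' \<and> V = V'"
proof -
  have "A * (U - U') + B * (V - V') = 0"
    using assms(4,7) by (simp add: algebra_simps)
  moreover have "degree (U - U') \<le> 1" "degree (V - V') \<le> 1"
    using assms(2,3,5,6) by (simp_all add: degree_diff_le)
  ultimately have "U - U' = 0 \<and> V - V' = 0"
    using F2_syzygy_trivial[OF assms(1)] by blast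
  then show ?thesis
    by simp
qed

lemma F2_bezout_X3_coeff_1:
  assumes "(A, B) \<in> F2" and "degree U \<le> 1" "degree V \<le> 1" "A * U + B * V = monom 1 3"
  shows "coeff U 1 = 1"
proof -
  obtain a0 a1 b0 b1 where A: "A = [:a0, a1, 1:]" and B: "B = [:b0, b1:]"
    using assms(1) unfolding F2_iff by blast
  obtain u0 u1 v0 v1 where U: "U = [:u0, u1:]" and V: "V = [:v0, v1:]"
    using linear_poly_eq[OF assms(2)] linear_poly_eq[OF assms(3)] by blast
  have "[:a0*u0 + b0*v0, a0*u1 + a1*u0 + b0*v1 + b1*v0, u0 + a1*u1 + b1*v1, u1:] = [:0, 0, 0, 1:]"
    using assms(4) unfolding A B U V quadratic_linear_combination monom_1_3 .
  then show ?thesis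
    unfolding U by simp
qed

lemma F2_bezout_X3_exists:
  assumes "(A, B) \<in> F2"
  shows "\<exists>U V. degree U = 1 \<and> degree V \<le> 1 \<and> A * U + B * V = monom 1 3"
proof -
  obtain a0 a1 b0 b1 r y where A: "A = [:a0, a1, 1:]" and B: "B = [:b0, b1:]"
    and r: "r = b0^2 - a1*b0*b1 + a0*b1^2" and "r * y = 1"
    using assms unfolding F2_iff invertible_elt_def by blast
  define m where "m = a1*b0 - a0*b1"
  define U where "U = [:- b0*m*y, 1:]"
  define V where "V = [:a0*m*y, (a1^2*b0 - a0*b0 - a0*a1*b1)*y:]"
  have "a0*(- b0*m*y) + b0*(a0*m*y) = 0"
    by (simp add: algebra_simps)
  moreover have "a0*1 + a1*(- b0*m*y) + b0*((a1^2*b0 - a0*b0 - a0*a1*b1)*y) + b1*(a0*m*y)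
      = a0 - a0*(r*y)"
    by (simp add: r m_def algebra_simps power2_eq_square)
  moreover have "- b0*m*y + a1*1 + b1*((a1^2*b0 - a0*b0 - a0*a1*b1)*y) = a1 - a1*(r*y)"
    by (simp add: r m_def algebra_simps power2_eq_square)
  ultimately have "A * U + B * V = monom 1 3"
    unfolding A B U_def V_def quadratic_linear_combination monom_1_3 using \<open>r * y = 1\<close> by simp
  moreover have "degree U = 1" "degree V \<le> 1"
    by (simp_all add: U_def V_def)
  ultimately show ?thesis
    by blast
qed

lemma phi2_eqI:
  assumes "(A, B) \<in> F2" and "degree U = 1" "degree V \<le> 1" "A * U + B * V = monom 1 3"
  shows "phi2 A B = - coeff V 1"
proof -
  have "(THE (U, V). degree U = 1 \<and> degree V \<le> 1 \<and> A * U + B * V = monom 1 3) = (U, V)"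
  proof (rule the_equality)
    fix UV
    assume "case UV of (U', V') \<Rightarrow> degree U' = 1 \<and> degree V' \<le> 1 \<and> A * U' + B * V' = monom 1 3"
    then obtain U' V' where "UV = (U', V')"
      and "degree U' = 1" "degree V' \<le> 1" "A * U' + B * V' = monom 1 3"
      by (cases UV) simp
    then show "UV = (U, V)"
      using F2_bezout_X3_unique[OF assms(1), of U V U' V'] assms(2-4) by simp
  qed (use assms in simp)
  then show ?thesis
    by (simp add: phi2_def)
qed

lemma phi2_Ga_act:
  assumes "(A, B) \<in> F2"
  shows "phi2 (A + smult h B) B = phi2 A B + h"
proof -
  obtain U V where sol: "degree U = 1" "degree V \<le> 1" "A * U + B * V = monom 1 3"
    using F2_bezout_X3_exists[OF assms] by blast
  have act: "(A + smult h B, B) \<in> F2"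
    using Ga_act_F2[OF assms] by (simp add: Ga_act_def)
  have "(A + smult h B) * U + B * (V - smult h U) = A * U + B * V"
    by (simp add: algebra_simps)
  moreover have "degree (V - smult h U) \<le> 1"
    using sol by (simp add: degree_diff_le degree_smult_le order_trans[OF degree_smult_le])
  ultimately have "phi2 (A + smult h B) B = - coeff (V - smult h U) 1"
    using phi2_eqI[OF act sol(1)] sol(3) by simp
  also have "\<dots> = phi2 A B + h"
    using phi2_eqI[OF assms sol] F2_bezout_X3_coeff_1[OF assms _ sol(2,3)] sol(1) by simp
  finally show ?thesis .
qed

lemma Bez_phi2_Ga_equivariant:
  assumes "(A, B) \<in> F2"
  shows "(\<lambda>(A', B'). (Bez 2 A' B', phi2 A' B')) (Ga_act h (A, B)) = (Bez 2 A B, phi2 A B + h)"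
  using assms by (simp add: Ga_act_def Bez_Ga_act phi2_Ga_act)

lemma Bez_phi2_inj_on: "inj_on (\<lambda>(A, B). (Bez 2 A B, phi2 A B)) F2"
proof (rule inj_onI, clarify)
  fix A B A' B'
  assume F: "(A, B) \<in> F2" "(A', B') \<in> F2"
    and "Bez 2 A B = Bez 2 A' B'" "phi2 A B = phi2 A' B'"
  obtain h where h: "(A', B') = Ga_act h (A, B)"
    using Bez_2_eq_imp_Ga_act F \<open>Bez 2 A B = Bez 2 A' B'\<close> by blast
  have "phi2 A' B' = phi2 A B + h"
    using Bez_phi2_Ga_equivariant[OF F(1), of h] unfolding h[symmetric] by simp
  then have "h = 0"
    using \<open>phi2 A B = phi2 A' B'\<close> by simp
  then show "A = A' \<and> B = B'"
    using h by (simp add: Ga_act_def)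
qed

lemma Bez_phi2_image: "(\<lambda>(A, B). (Bez 2 A B, phi2 A B)) ` F2 = S2 \<times> UNIV"
proof
  show "(\<lambda>(A, B). (Bez 2 A B, phi2 A B)) ` F2 \<subseteq> S2 \<times> UNIV"
    by (rule image_subsetI, clarify) (simp add: Bez_2_in_S2)
next
  show "S2 \<times> UNIV \<subseteq> (\<lambda>(A, B). (Bez 2 A B, phi2 A B)) ` F2"
  proof clarify
    fix M t assume "M \<in> S2"
    then obtain A B where F: "(A, B) \<in> F2" and "Bez 2 A B = M"
      using Bez_2_onto_S2 by blast
    then have "(M, t) = (\<lambda>(A, B). (Bez 2 A B, phi2 A B)) (Ga_act (t - phi2 A B) (A, B))"
      using Bez_phi2_Ga_equivariant[OF F] by simp
    then show "(M, t) \<in> (\<lambda>(A, B). (Bez 2 A B, phi2 A B)) ` F2"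
      using Ga_act_F2[OF F] by (rule image_eqI)
  qed
qed

theorem proposition3p19:
  fixes \<iota> :: "'k::field \<Rightarrow> 'r::comm_ring_1"
  assumes "\<iota> 1 = 1"
    and "\<And>x y. \<iota> (x + y) = \<iota> x + \<iota> y"
    and "\<And>x y. \<iota> (x * y) = \<iota> x * \<iota> y"
  shows "bij_betw (\<lambda>(A, B). (Bez 2 A B, phi2 A B)) (F2 :: ('r poly \<times> 'r poly) set) (S2 \<times> UNIV)
    \<and> (\<forall>h. \<forall>(A, B) \<in> (F2 :: ('r poly \<times> 'r poly) set).
          (\<lambda>(A', B'). (Bez 2 A' B', phi2 A' B')) (Ga_act h (A, B)) = (Bez 2 A B, phi2 A B + h))"
proof (intro conjI allI ballI)
  show "bij_betw (\<lambda>(A, B). (Bez 2 A B, phi2 A B)) F2 (S2 \<times> UNIV)"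
    unfolding bij_betw_def using Bez_phi2_inj_on Bez_phi2_image by blast
next
  fix h and AB :: "'r poly \<times> 'r poly"
  assume "AB \<in> F2"
  then show "case AB of (A, B) \<Rightarrow>
      (\<lambda>(A', B'). (Bez 2 A' B', phi2 A' B')) (Ga_act h (A, B)) = (Bez 2 A B, phi2 A B + h)"
    using Bez_phi2_Ga_equivariant by (cases AB) simp
qed

end
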